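(* Let $X$ be a non-negative continuous random variable with density $f$ satisfying $f(t)\le Ce^{-\lambda t}$ for some $C,\lambda>0$, whose support can be partitioned into finitely many intervals on each of which $f$ is differentiable and monotone, and such that $x\le C'\mathbb{E}[X_{\le x}]$ for all $x$ in some interval $(\chi_{\min},\chi_{\min}+\epsilon_0)$. Let $m\in(\chi_{\min},\chi_{\max})$ and let $Y$ be an $m$-reasonable random variable. Then there is $\delta<1$ depending only on $m$ such that for all positive integers $n$ and all $Q \le (n-n^{2/3})\mathbb{E}Y$, \[ \sum_{i=n+1}^\infty \Pr_{y_1,\ldots,y_{i-1}\sim Y}\Big[\sum_{j=1}^{i-1}y_j<Q\Big] = O(\delta^{n^{1/4}}), \] where the implied constant depends only on $m$.
   Context: $\chi_{\min} = \inf\{x:\Pr[X\ge x]>0\}$, $\chi_{\max} = \sup\{x:\Pr[X\le x]>0\}$. $X_{\le x}$ ($X_{\ge x}$) denotes $X$ conditioned on $X\le x$ ($X\ge x$). $Y$ is $m$-reasonable if either $Y=X_{\ge x}$ for some $x\le m$ or $Y=X_{\le x}$ for some $x\ge m$. $y_1,y_2,\ldots$ are independent copies of $Y$. The hypotheses on $X$ are the paper's standing assumptions. *)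

theory Defs
  imports "HOL-Probability.Probability"
begin

definition law :: "(real \<Rightarrow> real) \<Rightarrow> real measure" where
  "law f = density lborel (\<lambda>t. ennreal (f t))"

(* X conditioned on X \<le> x, resp. X \<ge> x (library: uniform_measure = conditioning) *)
definition cond_le :: "real measure \<Rightarrow> real \<Rightarrow> real measure" where
  "cond_le M x = uniform_measure M {..x}"

definition cond_ge :: "real measure \<Rightarrow> real \<Rightarrow> real measure" where
  "cond_ge M x = uniform_measure M {x..}"

definition expect :: "real measure \<Rightarrow> real" where
  "expect M = (\<integral>t. t \<partial>M)"

definition chi_min :: "real measure \<Rightarrow> real" where
  "chi_min M = Inf {x. measure M {..x} > 0}"

definition chi_max :: "real measure \<Rightarrow> ereal" where
  "chi_max M = Sup {ereal x | x. measure M {x..} > 0}"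

definition reasonable :: "real measure \<Rightarrow> real \<Rightarrow> real measure \<Rightarrow> bool" where
  "reasonable M m Y \<longleftrightarrow>
     (\<exists>x. x \<le> m \<and> Y = cond_ge M x) \<or> (\<exists>x. x \<ge> m \<and> Y = cond_le M x)"

definition sum_lt_prob :: "real measure \<Rightarrow> nat \<Rightarrow> real \<Rightarrow> real" where
  "sum_lt_prob Y k Q =
     measure (PiM {..<k} (\<lambda>_. Y))
       {y \<in> space (PiM {..<k} (\<lambda>_. Y)). (\<Sum>j<k. y j) < Q}"

end

theory Submission
  imports Defs
begin

text \<open>
  Every \<open>m\<close>-reasonable \<open>Y\<close> is \<open>X\<close> conditioned on an event of probability at least
  \<open>p\<^sub>0 = min (Pr[X \<le> m]) (Pr[X \<ge> m]) > 0\<close> that contains \<open>[m,\<infinity>)\<close> or \<open>(-\<infinity>,m]\<close>, so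
  \<open>E Y \<ge> \<mu>\<^sub>0 > 0\<close> and \<open>E Y\<^sup>2 \<le> E X\<^sup>2 / p\<^sub>0\<close> uniformly in \<open>Y\<close>; the exponential tail of the density
  makes \<open>E X\<^sup>2\<close> finite. For such moment bounds, Chernoff's method with
  \<open>e\<^sup>-\<^sup>x \<le> 1 - x + x\<^sup>2/2\<close> and \<open>t = E Y / (S\<^sub>0 n\<^sup>1\<^sup>/\<^sup>3)\<close> bounds the probability that \<open>n + j\<close> samples
  sum to less than \<open>(n - n\<^sup>2\<^sup>/\<^sup>3) E Y\<close> by \<open>exp (-c (n\<^sup>1\<^sup>/\<^sup>3 + j / n\<^sup>1\<^sup>/\<^sup>3))\<close>. Summing this geometric
  series over \<open>j\<close> gives \<open>O(exp (-c n\<^sup>1\<^sup>/\<^sup>3 / 2))\<close>, which is even better than claimed.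
\<close>

definition nonneg_l2_law :: "real measure \<Rightarrow> bool" where
  "nonneg_l2_law Y \<longleftrightarrow> prob_space Y \<and> sets Y = sets borel \<and> (AE y in Y. 0 \<le> y)
     \<and> integrable Y (\<lambda>y. y) \<and> integrable Y (\<lambda>y. y\<^sup>2)"

lemma exp_neg_le_quadratic:
  fixes u :: real
  assumes "0 \<le> u"
  shows "exp (- u) \<le> 1 - u + u\<^sup>2 / 2"
proof -
  let ?g = "\<lambda>u::real. 1 - u + u\<^sup>2 / 2 - exp (- u)"
  have deriv: "(?g has_real_derivative (-1 + x + exp (- x))) (at x)" for x
    by (auto intro!: derivative_eq_intros simp: power2_eq_square)
  have "?g 0 \<le> ?g u"
  proof (rule DERIV_nonneg_imp_nondecreasing[OF assms])
    fix x :: real assume "0 \<le> x" "x \<le> u"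
    show "\<exists>y. (?g has_real_derivative y) (at x) \<and> 0 \<le> y"
      using deriv[of x] exp_ge_add_one_self[of "- x"] by auto
  qed
  then show ?thesis by simp
qed

lemma nn_integral_exp_neg_le:
  assumes Y: "nonneg_l2_law Y" and t: "0 \<le> t"
  shows "(\<integral>\<^sup>+y. ennreal (exp (- t * y)) \<partial>Y)
           \<le> ennreal (exp (- t * expect Y + t\<^sup>2 * (\<integral>y. y\<^sup>2 \<partial>Y) / 2))"
proof -
  interpret Y: prob_space Y using Y by (simp add: nonneg_l2_law_def)
  have i1: "integrable Y (\<lambda>y. y)" and i2: "integrable Y (\<lambda>y. y\<^sup>2)" and nn: "AE y in Y. 0 \<le> y"
    using Y by (auto simp: nonneg_l2_law_def)
  have "(\<integral>\<^sup>+y. ennreal (exp (- t * y)) \<partial>Y) \<le> (\<integral>\<^sup>+y. ennreal (1 - t * y + t\<^sup>2 / 2 * y\<^sup>2) \<partial>Y)"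
    using nn
  proof (intro nn_integral_mono_AE, eventually_elim)
    case (elim y)
    have "exp (- (t * y)) \<le> 1 - t * y + (t * y)\<^sup>2 / 2"
      by (rule exp_neg_le_quadratic) (use elim t in simp)
    then show ?case by (intro ennreal_leI) (simp add: power_mult_distrib)
  qed
  also have "\<dots> = ennreal (\<integral>y. (1 - t * y + t\<^sup>2 / 2 * y\<^sup>2) \<partial>Y)"
  proof (rule nn_integral_eq_integral)
    show "integrable Y (\<lambda>y. 1 - t * y + t\<^sup>2 / 2 * y\<^sup>2)" using i1 i2 by auto
    have "0 \<le> 1 - t * y + t\<^sup>2 / 2 * y\<^sup>2" for y :: real
      using sum_power2_ge_zero[of "1 - t * y" 1] by (simp add: power2_eq_square algebra_simps)
    then show "AE y in Y. 0 \<le> 1 - t * y + t\<^sup>2 / 2 * y\<^sup>2" by simp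
  qed
  also have "(\<integral>y. (1 - t * y + t\<^sup>2 / 2 * y\<^sup>2) \<partial>Y) = 1 + (- t * expect Y + t\<^sup>2 * (\<integral>y. y\<^sup>2 \<partial>Y) / 2)"
    using i1 i2 by (simp add: expect_def Y.prob_space)
  also have "\<dots> \<le> exp (- t * expect Y + t\<^sup>2 * (\<integral>y. y\<^sup>2 \<partial>Y) / 2)"
    by (rule exp_ge_add_one_self)
  finally show ?thesis by (simp add: ennreal_leI)
qed

lemma sum_lt_prob_le_exp:
  assumes Y: "nonneg_l2_law Y" and t: "0 \<le> t"
  shows "sum_lt_prob Y k Q \<le> exp (t * Q - k * t * expect Y + k * t\<^sup>2 * (\<integral>y. y\<^sup>2 \<partial>Y) / 2)"
proof -
  interpret Y: prob_space Y using Y by (simp add: nonneg_l2_law_def)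
  interpret P: product_prob_space "\<lambda>_. Y" "{..<k}" by unfold_locales
  define P where "P = PiM {..<k} (\<lambda>_. Y)"
  define A where "A = {y \<in> space P. (\<Sum>j<k. y j) < Q}"
  define a where "a = - t * expect Y + t\<^sup>2 * (\<integral>y. y\<^sup>2 \<partial>Y) / 2"
  have [measurable]: "g \<in> borel_measurable Y" if "g \<in> borel_measurable borel" for g :: "real \<Rightarrow> real"
  proof -
    have "sets Y = sets borel" using Y by (simp add: nonneg_l2_law_def)
    then show ?thesis using that measurable_cong_sets[OF _ refl] by blast
  qed
  have A_sets: "A \<in> sets P" unfolding A_def P_def by measurable
  have markov: "indicator A x \<le> ennreal (exp (t * Q)) * (\<Prod>j<k. ennreal (exp (- t * x j)))" for x
  proof (cases "x \<in> A")
    case True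
    then have "0 \<le> t * Q + (\<Sum>j<k. - t * x j)"
      using t by (simp add: A_def sum_negf sum_distrib_left[symmetric] mult_left_mono)
    then have "1 \<le> exp (t * Q + (\<Sum>j<k. - t * x j))" by simp
    then have "1 \<le> exp (t * Q) * (\<Prod>j<k. exp (- t * x j))"
      by (simp add: exp_add exp_sum)
    then show ?thesis
      using True by (simp add: prod_ennreal ennreal_mult[symmetric] prod_nonneg ennreal_leI flip: ennreal_1)
  qed simp
  have "emeasure P A = (\<integral>\<^sup>+x. indicator A x \<partial>P)" using A_sets by simp
  also have "\<dots> \<le> (\<integral>\<^sup>+x. ennreal (exp (t * Q)) * (\<Prod>j<k. ennreal (exp (- t * x j))) \<partial>P)"
    by (intro nn_integral_mono markov)
  also have "\<dots> = ennreal (exp (t * Q)) * (\<Prod>j<k. \<integral>\<^sup>+y. ennreal (exp (- t * y)) \<partial>Y)"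
    unfolding P_def using P.product_nn_integral_prod[of "{..<k}" "\<lambda>_ y. ennreal (exp (- t * y))"]
    by (subst nn_integral_cmult) auto
  also have "\<dots> \<le> ennreal (exp (t * Q)) * (\<Prod>j<k. ennreal (exp a))"
    unfolding a_def using nn_integral_exp_neg_le[OF Y t]
    by (intro mult_left_mono prod_mono_ennreal) auto
  also have "\<dots> = ennreal (exp (t * Q + k * a))"
    by (simp add: ennreal_mult ennreal_power exp_add exp_of_nat_mult power_mult_distrib flip: exp_of_nat_mult)
  finally have "measure P A \<le> exp (t * Q + k * a)"
    by (simp add: P_def P.emeasure_eq_measure)
  then show ?thesis unfolding sum_lt_prob_def A_def P_def a_def by (simp add: algebra_simps)
qed

lemma chernoff_exponent_le:
  fixes u S mu0 mu s Q j :: real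
  assumes u: "1 \<le> u" and S: "0 < S" and mu: "0 < mu0" "mu0 \<le> mu" and s: "s \<le> S"
    and Q: "Q \<le> (u ^ 3 - u\<^sup>2) * mu" and j: "0 \<le> j"
  defines "t \<equiv> mu / (S * u)"
  shows "t * Q - (u ^ 3 + j) * t * mu + (u ^ 3 + j) * t\<^sup>2 * s / 2 \<le> - (mu0\<^sup>2 / (2 * S)) * (u + j / u)"
proof -
  have t: "0 \<le> t" using u S mu by (simp add: t_def)
  have "t * Q - (u ^ 3 + j) * t * mu + (u ^ 3 + j) * t\<^sup>2 * s / 2
          \<le> t * ((u ^ 3 - u\<^sup>2) * mu) - (u ^ 3 + j) * t * mu + (u ^ 3 + j) * t\<^sup>2 * S / 2"
    using Q s t u j by (intro add_mono diff_mono mult_left_mono divide_right_mono) auto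
  also have "\<dots> = - (mu\<^sup>2 / S) * (u / 2 + j / u - j / (2 * u\<^sup>2))"
    using u S by (simp add: t_def field_simps power2_eq_square power3_eq_cube)
  also have "\<dots> \<le> - (mu\<^sup>2 / S) * ((u + j / u) / 2)"
  proof -
    have "u \<le> u\<^sup>2" using u by (simp add: power2_eq_square)
    then have "j / (2 * u\<^sup>2) \<le> j / (2 * u)"
      using u j by (intro divide_left_mono) auto
    moreover have "j / u = j / (2 * u) + j / (2 * u)" "(u + j / u) / 2 = u / 2 + j / (2 * u)"
      by (simp_all add: field_simps)
    ultimately have "(u + j / u) / 2 \<le> u / 2 + j / u - j / (2 * u\<^sup>2)" by linarith
    then show ?thesis using S by (intro mult_left_mono_neg) auto
  qed
  also have "\<dots> \<le> - (mu0\<^sup>2 / S) * ((u + j / u) / 2)"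
  proof -
    have "mu0\<^sup>2 / S \<le> mu\<^sup>2 / S" using mu S by (intro divide_right_mono power_mono) auto
    then show ?thesis using u j by (intro mult_right_mono) auto
  qed
  finally show ?thesis by (simp add: field_simps)
qed

lemma exp_neg_mult_one_plus_le:
  fixes c u :: real
  assumes c: "0 < c" and u: "0 \<le> u"
  shows "exp (- c * u) * (1 + u / c) \<le> (1 + 2 / c\<^sup>2) * exp (- c / 2 * u)"
proof -
  define E where "E = exp (c * u / 2)"
  have "u / c = 2 / c\<^sup>2 * (c * u / 2)" using c by (simp add: field_simps power2_eq_square)
  also have "\<dots> \<le> 2 / c\<^sup>2 * E"
  proof (rule mult_left_mono)
    show "c * u / 2 \<le> E" using exp_ge_add_one_self[of "c * u / 2"] unfolding E_def by linarith
  qed simp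
  moreover have "1 \<le> E" using c u by (simp add: E_def)
  ultimately have "1 + u / c \<le> (1 + 2 / c\<^sup>2) * E" by (simp add: distrib_right)
  then have "exp (- c * u) * (1 + u / c) \<le> exp (- c * u) * ((1 + 2 / c\<^sup>2) * E)"
    by (rule mult_left_mono) simp
  also have "\<dots> = (1 + 2 / c\<^sup>2) * exp (- c / 2 * u)"
    by (simp add: E_def mult_exp_exp)
  finally show ?thesis .
qed

lemma summable_exp_decay_suminf_le:
  fixes c u :: real and P :: "nat \<Rightarrow> real"
  assumes c: "0 < c" and u: "0 < u"
    and P_nonneg: "\<And>j. 0 \<le> P j" and P_le: "\<And>j. P j \<le> exp (- c * (u + j / u))"
  shows "summable P \<and> suminf P \<le> (1 + 2 / c\<^sup>2) * exp (- c / 2 * u)"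
proof -
  define r where "r = exp (- c / u)"
  have r: "0 < r" "r < 1" using c u by (auto simp: r_def)
  have geometric: "exp (- c * (u + j / u)) = exp (- c * u) * r ^ j" for j :: nat
    by (simp add: r_def exp_of_nat_mult[symmetric] exp_add[symmetric] algebra_simps)
  have sg: "summable (\<lambda>j. exp (- c * u) * r ^ j)"
    using r by (intro summable_mult summable_geometric) auto
  have sP: "summable P"
    by (rule summable_comparison_test[OF _ sg]) (use P_nonneg P_le geometric in auto)
  have "1 / (1 - r) \<le> 1 + u / c"
  proof -
    have "r * (1 + c / u) \<le> 1"
      using exp_ge_add_one_self[of "c / u"] by (simp add: r_def exp_minus field_simps)
    then have "1 \<le> (1 - r) * (1 + u / c)" using c u by (simp add: field_simps)
    then show ?thesis using r by (simp add: field_simps)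
  qed
  have "suminf P \<le> (\<Sum>j. exp (- c * u) * r ^ j)"
    by (rule suminf_le[OF _ sP sg]) (use P_le geometric in auto)
  also have "\<dots> = exp (- c * u) * (1 / (1 - r))"
    using r by (simp add: suminf_mult suminf_geometric)
  also have "\<dots> \<le> exp (- c * u) * (1 + u / c)"
    by (rule mult_left_mono) (fact, simp)
  also have "\<dots> \<le> (1 + 2 / c\<^sup>2) * exp (- c / 2 * u)"
    using c u by (intro exp_neg_mult_one_plus_le) auto
  finally show ?thesis using sP by simp
qed

lemma sum_lt_prob_tail_bound:
  assumes Y: "nonneg_l2_law Y" and mu0: "0 < mu0" "mu0 \<le> expect Y"
    and S: "0 < S" "(\<integral>y. y\<^sup>2 \<partial>Y) \<le> S"
    and n: "1 \<le> n" and Q: "Q \<le> (real n - real n powr (2/3)) * expect Y"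
  defines "c \<equiv> mu0\<^sup>2 / (2 * S)"
  shows "summable (\<lambda>j. sum_lt_prob Y (n + j) Q)
           \<and> (\<Sum>j. sum_lt_prob Y (n + j) Q) \<le> (1 + 2 / c\<^sup>2) * exp (- c / 2 * real n powr (1/3))"
proof -
  define u where "u = real n powr (1/3)"
  have u: "1 \<le> u" using n by (simp add: u_def ge_one_powr_ge_zero)
  have u_cube: "u ^ 3 = real n" and u_square: "u\<^sup>2 = real n powr (2/3)"
    unfolding u_def using n by (subst powr_power; simp)+
  define t where "t = expect Y / (S * u)"
  have t: "0 \<le> t" using mu0 S u by (simp add: t_def)
  have "sum_lt_prob Y (n + j) Q \<le> exp (- c * (u + j / u))" for j :: nat
  proof -
    have "sum_lt_prob Y (n + j) Q
            \<le> exp (t * Q - real (n + j) * t * expect Y + real (n + j) * t\<^sup>2 * (\<integral>y. y\<^sup>2 \<partial>Y) / 2)"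
      by (rule sum_lt_prob_le_exp[OF Y t])
    also have "\<dots> \<le> exp (- c * (u + j / u))"
      using chernoff_exponent_le[OF u S(1) mu0 S(2), of Q "real j"] Q u_cube u_square
      by (simp add: c_def t_def)
    finally show ?thesis .
  qed
  moreover have "0 \<le> sum_lt_prob Y k Q" for k by (simp add: sum_lt_prob_def)
  moreover have "0 < c" using mu0 S by (simp add: c_def)
  ultimately show ?thesis
    using summable_exp_decay_suminf_le[of c u "\<lambda>j. sum_lt_prob Y (n + j) Q"] u n by (simp add: u_def)
qed

lemma exp_mult_powr_third_le:
  fixes c x :: real
  assumes "0 < c" "1 \<le> x"
  shows "exp (- c * x powr (1/3)) \<le> exp (- c) powr (x powr (1/4))"
proof -
  have "x powr (1/4) \<le> x powr (1/3)" using assms by (intro powr_mono) auto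
  then show ?thesis using assms by (simp add: powr_def)
qed

locale exp_tail_density =
  fixes f :: "real \<Rightarrow> real" and C lam :: real
  assumes f_meas[measurable]: "f \<in> borel_measurable borel"
    and f_nonneg: "\<And>t. 0 \<le> f t"
    and f_zero_neg: "\<And>t. t < 0 \<Longrightarrow> f t = 0"
    and f_prob: "(\<integral>\<^sup>+ t. ennreal (f t) \<partial>lborel) = 1"
    and C_pos: "C > 0" and lam_pos: "lam > 0"
    and f_tail: "\<And>t. t \<ge> 0 \<Longrightarrow> f t \<le> C * exp (- lam * t)"
begin

abbreviation M :: "real measure" where
  "M \<equiv> law f"

lemma sets_law[simp, measurable_cong]: "sets M = sets borel"
  by (simp add: law_def)

lemma space_law[simp]: "space M = UNIV"
  by (simp add: law_def)

lemma prob_space_law: "prob_space M"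
  by (rule prob_spaceI) (simp add: law_def emeasure_density f_prob)

lemma measure_law: "A \<in> sets borel \<Longrightarrow> measure M A = enn2real (\<integral>\<^sup>+ x. ennreal (f x) * indicator A x \<partial>lborel)"
  by (simp add: law_def measure_def emeasure_density)

lemma f_mult_nonneg: "0 \<le> f x * x"
  by (cases "x < 0") (auto simp: f_zero_neg f_nonneg)

lemma integrable_f: "integrable lborel f"
  by (rule integrableI_nonneg) (auto simp: f_nonneg f_prob)

text \<open>The second moment is dominated by that of an exponential law, \<open>erlang_density 0 lam\<close>.\<close>

lemma integrable_f_mult_square: "integrable lborel (\<lambda>x. f x * x\<^sup>2)"
proof -
  have "integrable lborel (\<lambda>x. erlang_density 0 lam x * x\<^sup>2)"
  proof (rule integrableI_nonneg)
    show "(\<integral>\<^sup>+x. ennreal (erlang_density 0 lam x * x\<^sup>2) \<partial>lborel) < \<infinity>"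
      by (subst nn_integral_erlang_ith_moment[OF lam_pos]) (simp add: ennreal_divide_eq_top_iff)
  qed (simp_all add: lam_pos less_imp_le)
  then have "integrable lborel (\<lambda>x. (C / lam) * (erlang_density 0 lam x * x\<^sup>2))" by simp
  then show ?thesis
  proof (rule Bochner_Integration.integrable_bound)
    have "\<bar>f x * x\<^sup>2\<bar> \<le> \<bar>C / lam * (erlang_density 0 lam x * x\<^sup>2)\<bar>" for x :: real
    proof (cases "x < 0")
      case False
      then have "f x * x\<^sup>2 \<le> C * exp (- lam * x) * x\<^sup>2"
        using f_tail[of x] by (intro mult_right_mono) auto
      then show ?thesis
        using False C_pos lam_pos f_nonneg[of x] by (simp add: erlang_density_def)
    qed (simp add: f_zero_neg)
    then show "AE x in lborel. norm (f x * x\<^sup>2) \<le> norm (C / lam * (erlang_density 0 lam x * x\<^sup>2))"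
      by simp
  qed simp
qed

lemma integrable_f_mult: "integrable lborel (\<lambda>x. f x * x)"
  using Bochner_Integration.integrable_add[OF integrable_f integrable_f_mult_square]
proof (rule Bochner_Integration.integrable_bound)
  have "f x * \<bar>x\<bar> \<le> f x * (1 + x\<^sup>2)" for x :: real
    using sum_power2_ge_zero[of "\<bar>x\<bar> - 1" 0] f_nonneg[of x]
    by (intro mult_left_mono) (auto simp: power2_eq_square algebra_simps abs_mult_self_eq)
  then show "AE x in lborel. norm (f x * x) \<le> norm (f x + f x * x\<^sup>2)"
    using f_nonneg by (simp add: abs_mult algebra_simps)
qed simp

definition partial_mean :: "real set \<Rightarrow> real" where
  "partial_mean B = (\<integral>x. indicator B x * (f x * x) \<partial>lborel)"

lemma uniform_measure_law_eq_density:
  assumes A[measurable]: "A \<in> sets borel" and pos: "0 < measure M A"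
  shows "uniform_measure M A = density lborel (\<lambda>x. ennreal (f x * indicator A x / measure M A))"
proof -
  interpret prob_space M by (rule prob_space_law)
  have "uniform_measure M A = density lborel (\<lambda>x. ennreal (f x) * (indicator A x / emeasure M A))"
    unfolding uniform_measure_def law_def by (subst density_density_eq) auto
  also have "\<dots> = density lborel (\<lambda>x. ennreal (f x * indicator A x / measure M A))"
  proof (intro density_cong AE_I2)
    fix x
    show "ennreal (f x) * (indicator A x / emeasure M A) = ennreal (f x * indicator A x / measure M A)"
      using pos f_nonneg[of x] divide_ennreal[of 1 "measure M A"]
      by (cases "x \<in> A") (simp_all add: emeasure_eq_measure ennreal_mult[symmetric] divide_inverse)
  qed auto
  finally show ?thesis .
qed

lemma
  assumes A[measurable]: "A \<in> sets borel" and pos: "0 < measure M A"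
    and g[measurable]: "g \<in> borel_measurable borel"
  shows integrable_uniform_measure_law:
      "integrable lborel (\<lambda>x. f x * g x) \<Longrightarrow> integrable (uniform_measure M A) g"
    and integral_uniform_measure_law:
      "integral\<^sup>L (uniform_measure M A) g = (\<integral>x. indicator A x * (f x * g x) \<partial>lborel) / measure M A"
proof -
  define h where "h x = f x * indicator A x / measure M A" for x
  have [measurable]: "h \<in> borel_measurable borel" unfolding h_def by measurable
  have Y: "uniform_measure M A = density lborel (\<lambda>x. ennreal (h x))"
    unfolding h_def by (rule uniform_measure_law_eq_density[OF A pos])
  have h_nonneg: "0 \<le> h x" for x
    using pos f_nonneg[of x] by (simp add: h_def)
  have h_mult: "h x * g x = indicator A x * (f x * g x) / measure M A" for x
    by (simp add: h_def)
  show "integrable (uniform_measure M A) g" if "integrable lborel (\<lambda>x. f x * g x)"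
    using integrable_mult_indicator[of A lborel "\<lambda>x. f x * g x"] that
    unfolding Y by (subst integrable_density) (auto simp: h_nonneg h_mult)
  show "integral\<^sup>L (uniform_measure M A) g = (\<integral>x. indicator A x * (f x * g x) \<partial>lborel) / measure M A"
    unfolding Y by (subst integral_density) (auto simp: h_nonneg h_mult)
qed

lemma nonneg_l2_law_uniform_measure:
  assumes A[measurable]: "A \<in> sets borel" and pos: "0 < measure M A"
  shows "nonneg_l2_law (uniform_measure M A)"
  unfolding nonneg_l2_law_def
proof (intro conjI)
  interpret prob_space M by (rule prob_space_law)
  show "prob_space (uniform_measure M A)"
    using pos by (intro prob_space_uniform_measure) (auto simp: emeasure_eq_measure)
  show "AE y in uniform_measure M A. 0 \<le> y"
    unfolding uniform_measure_law_eq_density[OF A pos]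
  proof (subst AE_density, measurable, intro AE_I2 impI)
    fix x assume "0 < ennreal (f x * indicator A x / measure M A)"
    then have "f x \<noteq> 0" by auto
    then show "0 \<le> x" using f_zero_neg by (metis not_le)
  qed
  show "integrable (uniform_measure M A) (\<lambda>y. y)"
    by (rule integrable_uniform_measure_law[OF A pos]) (simp_all add: integrable_f_mult)
  show "integrable (uniform_measure M A) (\<lambda>y. y\<^sup>2)"
    by (rule integrable_uniform_measure_law[OF A pos]) (simp_all add: integrable_f_mult_square)
qed simp

lemma integrable_indicator_f_mult: "A \<in> sets borel \<Longrightarrow> integrable lborel (\<lambda>x. indicator A x * (f x * x))"
  using integrable_mult_indicator[of A lborel "\<lambda>x. f x * x"] integrable_f_mult by simp

lemma partial_mean_nonneg: "0 \<le> partial_mean B"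
  unfolding partial_mean_def by (intro integral_nonneg_AE AE_I2) (simp add: f_mult_nonneg)

lemma partial_mean_pos:
  assumes B[measurable]: "B \<in> sets borel" and pos: "0 < measure M B"
  shows "0 < partial_mean B"
proof -
  have "partial_mean B \<noteq> 0"
  proof
    assume "partial_mean B = 0"
    then have "AE x in lborel. indicator B x * (f x * x) = 0"
      using integral_nonneg_eq_0_iff_AE[OF integrable_indicator_f_mult[OF B]]
      by (simp add: partial_mean_def f_mult_nonneg)
    then have "AE x in lborel. ennreal (f x) * indicator B x = 0"
      using AE_lborel_singleton[of "0::real"] by eventually_elim (auto split: split_indicator)
    then have "(\<integral>\<^sup>+ x. ennreal (f x) * indicator B x \<partial>lborel) = 0"
      by (subst nn_integral_0_iff_AE) auto
    then have "measure M B = 0" by (simp add: measure_law)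
    with pos show False by simp
  qed
  with partial_mean_nonneg[of B] show ?thesis by linarith
qed

lemma partial_mean_le_expect_uniform_measure:
  assumes A[measurable]: "A \<in> sets borel" and B[measurable]: "B \<in> sets borel"
    and BA: "B \<subseteq> A" and pos: "0 < measure M A"
  shows "partial_mean B \<le> expect (uniform_measure M A)"
proof -
  interpret prob_space M by (rule prob_space_law)
  have "partial_mean B \<le> partial_mean A"
    unfolding partial_mean_def
    using BA f_mult_nonneg
    by (intro integral_mono integrable_indicator_f_mult A B) (auto split: split_indicator)
  also have "\<dots> \<le> partial_mean A / measure M A"
    using pos partial_mean_nonneg[of A] by (simp add: le_divide_eq mult_left_le)
  also have "\<dots> = expect (uniform_measure M A)"
    using integral_uniform_measure_law[OF A pos, of "\<lambda>x. x"] by (simp add: expect_def partial_mean_def)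
  finally show ?thesis .
qed

lemma second_moment_uniform_measure_le:
  assumes A[measurable]: "A \<in> sets borel" and p: "0 < p" "p \<le> measure M A"
  shows "(\<integral>y. y\<^sup>2 \<partial>uniform_measure M A) \<le> (\<integral>x. f x * x\<^sup>2 \<partial>lborel) / p"
proof -
  have pos: "0 < measure M A" using p by linarith
  have "(\<integral>y. y\<^sup>2 \<partial>uniform_measure M A) = (\<integral>x. indicator A x * (f x * x\<^sup>2) \<partial>lborel) / measure M A"
    by (rule integral_uniform_measure_law[OF A pos]) simp
  also have "\<dots> \<le> (\<integral>x. f x * x\<^sup>2 \<partial>lborel) / measure M A"
    using integrable_mult_indicator[of A lborel "\<lambda>x. f x * x\<^sup>2"] integrable_f_mult_square pos f_nonneg
    by (intro divide_right_mono integral_mono) (auto split: split_indicator)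
  also have "\<dots> \<le> (\<integral>x. f x * x\<^sup>2 \<partial>lborel) / p"
    using p f_nonneg by (intro divide_left_mono integral_nonneg_AE AE_I2) auto
  finally show ?thesis .
qed

lemma measure_atMost_neg:
  assumes "x < 0"
  shows "measure M {..x} = 0"
proof -
  have "(\<integral>\<^sup>+ t. ennreal (f t) * indicator {..x} t \<partial>lborel) = 0"
    using assms by (subst nn_integral_0_iff_AE) (auto simp: f_zero_neg split: split_indicator)
  then show ?thesis by (simp add: measure_law)
qed

lemma measure_atMost_pos:
  assumes "chi_min M < m"
  shows "0 < measure M {..m}"
proof -
  interpret prob_space M by (rule prob_space_law)
  define S where "S = {x. measure M {..x} > 0}"
  have "S \<noteq> {}"
  proof
    assume "S = {}"
    then have "{..real n} \<in> null_sets M" for n :: nat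
      using measure_nonneg[of M "{..real n}"]
      by (auto simp: S_def null_sets_def emeasure_eq_measure not_less intro: antisym)
    then have "(\<Union>n::nat. {..real n}) \<in> null_sets M" by blast
    moreover have "(\<Union>n::nat. {..real n}) = UNIV" by (auto intro: real_arch_simple)
    ultimately show False by (simp add: null_sets_def emeasure_space_1[simplified])
  qed
  moreover have "bdd_below S"
    using measure_atMost_neg by (intro bdd_belowI[of _ 0]) (force simp: S_def not_le[symmetric])
  moreover have "Inf S < m" using assms by (simp add: chi_min_def S_def)
  ultimately obtain x where "0 < measure M {..x}" "x < m"
    by (auto simp: cInf_less_iff S_def)
  then show ?thesis using finite_measure_mono[of "{..x}" "{..m}"] by auto
qed

lemma measure_atLeast_pos:
  assumes "ereal m < chi_max M"
  shows "0 < measure M {m..}"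
proof -
  interpret prob_space M by (rule prob_space_law)
  from assms obtain x where "0 < measure M {x..}" "m < x"
    unfolding chi_max_def by (auto simp: less_Sup_iff)
  then show ?thesis using finite_measure_mono[of "{x..}" "{m..}"] by auto
qed

lemma reasonable_moment_bounds:
  assumes "chi_min M < m" "ereal m < chi_max M"
  obtains mu0 S where "0 < mu0" "0 < S"
    "\<And>Y. reasonable M m Y \<Longrightarrow> nonneg_l2_law Y \<and> mu0 \<le> expect Y \<and> (\<integral>y. y\<^sup>2 \<partial>Y) \<le> S"
proof -
  interpret prob_space M by (rule prob_space_law)
  define p0 where "p0 = min (measure M {m..}) (measure M {..m})"
  define mu0 where "mu0 = min (partial_mean {m..}) (partial_mean {..m})"
  define S where "S = (\<integral>x. f x * x\<^sup>2 \<partial>lborel) / p0 + 1"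
  have p0: "0 < p0"
    using measure_atLeast_pos measure_atMost_pos assms by (simp add: p0_def)
  have mu0: "0 < mu0"
    using partial_mean_pos measure_atLeast_pos measure_atMost_pos assms by (simp add: mu0_def)
  have S: "0 < S"
    using p0 f_nonneg by (simp add: S_def add_nonneg_pos integral_nonneg_AE)
  have "nonneg_l2_law Y \<and> mu0 \<le> expect Y \<and> (\<integral>y. y\<^sup>2 \<partial>Y) \<le> S" if "reasonable M m Y" for Y
  proof -
    from that consider (ge) x where "x \<le> m" "Y = uniform_measure M {x..}"
      | (le) x where "m \<le> x" "Y = uniform_measure M {..x}"
      unfolding reasonable_def cond_ge_def cond_le_def by auto
    then obtain A B where [measurable]: "A \<in> sets borel" "B \<in> sets borel"
      and BA: "B \<subseteq> A" and Y: "Y = uniform_measure M A"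
      and pB: "p0 \<le> measure M B" and muB: "mu0 \<le> partial_mean B"
    proof cases
      case (ge x)
      then show ?thesis by (intro that[of "{x..}" "{m..}"]) (auto simp: p0_def mu0_def)
    next
      case (le x)
      then show ?thesis by (intro that[of "{..x}" "{..m}"]) (auto simp: p0_def mu0_def)
    qed
    have pA: "p0 \<le> measure M A" using pB finite_measure_mono[OF BA] by simp
    with p0 have pos: "0 < measure M A" by linarith
    show ?thesis
      unfolding Y
      using nonneg_l2_law_uniform_measure[OF _ pos] muB partial_mean_le_expect_uniform_measure[OF _ _ BA pos]
        second_moment_uniform_measure_le[OF _ p0 pA]
      by (auto simp: S_def)
  qed
  with mu0 S that show thesis by blast
qed

end

theorem lemma3:
  fixes f :: "real \<Rightarrow> real" and C lam :: real and m :: real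
  assumes f_meas: "f \<in> borel_measurable borel"
    and f_nonneg: "\<And>t. 0 \<le> f t"
    and f_zero_neg: "\<And>t. t < 0 \<Longrightarrow> f t = 0"
    and f_prob: "(\<integral>\<^sup>+ t. ennreal (f t) \<partial>lborel) = 1"
    and C_pos: "C > 0" and lam_pos: "lam > 0"
    and f_tail: "\<And>t. t \<ge> 0 \<Longrightarrow> f t \<le> C * exp (- lam * t)"
    and f_pieces: "\<exists>P. finite P \<and> (\<forall>I\<in>P. is_interval I \<and> I \<noteq> {})
                      \<and> (\<forall>I\<in>P. \<forall>J\<in>P. I \<noteq> J \<longrightarrow> I \<inter> J = {})
                      \<and> \<Union>P = {t. f t > 0}
                      \<and> (\<forall>I\<in>P. f differentiable_on I \<and> (mono_on I f \<or> antimono_on I f))"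
    and small_x: "\<exists>C' \<epsilon>0. \<epsilon>0 > 0 \<and>
                    (\<forall>x. chi_min (law f) < x \<and> x < chi_min (law f) + \<epsilon>0
                          \<longrightarrow> x \<le> C' * expect (cond_le (law f) x))"
    and m_range: "chi_min (law f) < m" "ereal m < chi_max (law f)"
  shows "\<exists>\<delta> K. 0 < \<delta> \<and> \<delta> < 1 \<and>
           (\<forall>Y n Q. reasonable (law f) m Y \<longrightarrow> n \<ge> 1 \<longrightarrow>
              Q \<le> (real n - real n powr (2/3)) * expect Y \<longrightarrow>
              summable (\<lambda>j. sum_lt_prob Y (n + j) Q) \<and>
              (\<Sum>j. sum_lt_prob Y (n + j) Q) \<le> K * \<delta> powr (real n powr (1/4)))"
proof -
  interpret exp_tail_density f C lam
    using assms by unfold_locales auto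
  obtain mu0 S where mu0: "0 < mu0" and S: "0 < S"
    and moments: "\<And>Y. reasonable (law f) m Y \<Longrightarrow>
                    nonneg_l2_law Y \<and> mu0 \<le> expect Y \<and> (\<integral>y. y\<^sup>2 \<partial>Y) \<le> S"
    using reasonable_moment_bounds[OF m_range] by blast
  define c where "c = mu0\<^sup>2 / (2 * S)"
  have c: "0 < c" using mu0 S by (simp add: c_def)
  show ?thesis
  proof (intro exI conjI allI impI)
    show "0 < exp (- c / 2)" "exp (- c / 2) < 1" using c by auto
    fix Y n Q
    assume Y: "reasonable (law f) m Y" and n: "1 \<le> n" and Q: "Q \<le> (real n - real n powr (2/3)) * expect Y"
    have tail: "summable (\<lambda>j. sum_lt_prob Y (n + j) Q)
        \<and> (\<Sum>j. sum_lt_prob Y (n + j) Q) \<le> (1 + 2 / c\<^sup>2) * exp (- (c / 2) * real n powr (1/3))"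
      using sum_lt_prob_tail_bound[OF _ mu0 _ S _ n Q] moments[OF Y] by (simp add: c_def)
    have "exp (- (c / 2) * real n powr (1/3)) \<le> exp (- c / 2) powr (real n powr (1/4))"
      using exp_mult_powr_third_le[of "c / 2" "real n"] c n by simp
    then have "(1 + 2 / c\<^sup>2) * exp (- (c / 2) * real n powr (1/3))
                 \<le> (1 + 2 / c\<^sup>2) * exp (- c / 2) powr (real n powr (1/4))"
      by (rule mult_left_mono) (simp add: add_nonneg_nonneg)
    with tail show "summable (\<lambda>j. sum_lt_prob Y (n + j) Q)"
      "(\<Sum>j. sum_lt_prob Y (n + j) Q) \<le> (1 + 2 / c\<^sup>2) * exp (- c / 2) powr (real n powr (1/4))"
      by linarith+
  qed
qed

end
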